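(* Let $\mathcal{G}=(V,L)$ be a finite connected undirected graph with monitor set $M$ and non-monitor set $N=V\setminus M$, $\sigma=|N|$, let $S\subseteq N$ be nonempty, let $m\in M$, and let $q$ be an integer with $0\le q\le\sigma-1$. The following are equivalent: (1) for every set $V'$ consisting of $m$ together with at most $q$ non-monitors, each connected component of $\mathcal{G}-V'$ that contains a node of $S$ also contains a monitor; (2) $\Gamma_{\mathcal{G}_m}(S,m')\ge q+1$.
   Context: $\mathcal{G}-V'$ denotes deletion of the nodes of $V'$ and incident links. For $M'\subseteq M$, $\mathcal{N}(M')$ is the set of non-monitors adjacent to at least one monitor of $M'$. $\mathcal{G}_m$ is obtained from $\mathcal{G}$ by deleting all monitors, adding a virtual node $m'$, and linking $m'$ to every node of $\mathcal{N}(M\setminus\{m\})$. For nodes $s,t$ of a graph $\mathcal{H}$, $C_{\mathcal{H}}(s,t)$ is a minimum-cardinality set of nodes (other than $s,t$) whose deletion destroys all $s$–$t$ paths; if $s,t$ are adjacent, $C_{\mathcal{H}}(s,t):=V(\mathcal{H})\setminus\{t\}$. $\Gamma_{\mathcal{H}}(S,m'):=\min_{w\in S}|C_{\mathcal{H}}(w,m')|$. *)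

theory Defs
  imports Main
begin

definition ugraph :: "'a set \<Rightarrow> ('a \<Rightarrow> 'a \<Rightarrow> bool) \<Rightarrow> bool" where
  "ugraph V E \<longleftrightarrow> finite V \<and> (\<forall>u v. E u v \<longrightarrow> u \<in> V \<and> v \<in> V)
     \<and> (\<forall>u v. E u v \<longrightarrow> E v u) \<and> (\<forall>u. \<not> E u u)"

definition reach :: "('a \<Rightarrow> 'a \<Rightarrow> bool) \<Rightarrow> 'a set \<Rightarrow> 'a \<Rightarrow> 'a \<Rightarrow> bool" where
  "reach E W s t \<longleftrightarrow> s \<in> W \<and> (\<lambda>x y. E x y \<and> x \<in> W \<and> y \<in> W)\<^sup>*\<^sup>* s t"

definition connected_graph :: "'a set \<Rightarrow> ('a \<Rightarrow> 'a \<Rightarrow> bool) \<Rightarrow> bool" where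
  "connected_graph V E \<longleftrightarrow> ugraph V E \<and> (\<forall>u\<in>V. \<forall>v\<in>V. reach E V u v)"

definition components :: "('a \<Rightarrow> 'a \<Rightarrow> bool) \<Rightarrow> 'a set \<Rightarrow> 'a set set" where
  "components E W = {{t. reach E W s t} | s. s \<in> W}"

definition nbr_nonmon :: "'a set \<Rightarrow> ('a \<Rightarrow> 'a \<Rightarrow> bool) \<Rightarrow> 'a set \<Rightarrow> 'a set \<Rightarrow> 'a set" where
  "nbr_nonmon V E M M' = {v \<in> V - M. \<exists>u\<in>M'. E u v}"

text \<open>G_m: monitors deleted, virtual node m' (= None) added, linked to every node of
  \<N>(M - {m}). Non-monitor v is represented by Some v.\<close>
definition Gm_V :: "'a set \<Rightarrow> 'a set \<Rightarrow> 'a option set" where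
  "Gm_V V M = insert None (Some ` (V - M))"

definition Gm_E :: "'a set \<Rightarrow> ('a \<Rightarrow> 'a \<Rightarrow> bool) \<Rightarrow> 'a set \<Rightarrow> 'a \<Rightarrow> 'a option \<Rightarrow> 'a option \<Rightarrow> bool" where
  "Gm_E V E M m x y = (case (x, y) of
       (Some u, Some v) \<Rightarrow> u \<in> V - M \<and> v \<in> V - M \<and> E u v
     | (None, Some v) \<Rightarrow> v \<in> nbr_nonmon V E M (M - {m})
     | (Some u, None) \<Rightarrow> u \<in> nbr_nonmon V E M (M - {m})
     | (None, None) \<Rightarrow> False)"

definition min_cut_card :: "'b set \<Rightarrow> ('b \<Rightarrow> 'b \<Rightarrow> bool) \<Rightarrow> 'b \<Rightarrow> 'b \<Rightarrow> nat" where
  "min_cut_card VH EH s t =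
     (if EH s t then card (VH - {t})
      else (LEAST k. \<exists>C. C \<subseteq> VH - {s, t} \<and> \<not> reach EH (VH - C) s t \<and> card C = k))"

definition Gamma :: "'b set \<Rightarrow> ('b \<Rightarrow> 'b \<Rightarrow> bool) \<Rightarrow> 'b set \<Rightarrow> 'b \<Rightarrow> nat" where
  "Gamma VH EH S t = Min ((\<lambda>w. min_cut_card VH EH w t) ` S)"

end

theory Submission
  imports Defs
begin

text \<open>A component of \<open>\<G> - V'\<close> that meets \<open>S\<close> contains a monitor iff every node of \<open>S\<close> outside
  \<open>V'\<close> reaches a monitor in \<open>\<G> - V'\<close>. Since \<open>m\<close> is deleted, such a monitor lies in \<open>M - {m}\<close>,
  and a path to it ends with an edge from \<open>\<N>(M - {m})\<close>; contracting \<open>M - {m}\<close> to \<open>m'\<close> turns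
  these paths into \<open>w\<close>--\<open>m'\<close> paths of \<open>\<G>\<^sub>m\<close> avoiding \<open>V' - {m}\<close>, and vice versa. Hence (1) says
  that no set of at most \<open>q\<close> non-monitors separates any \<open>w \<in> S\<close> from \<open>m'\<close> in \<open>\<G>\<^sub>m\<close>, which is
  \<open>|C(w, m')| \<ge> q + 1\<close> for all \<open>w \<in> S\<close>; the adjacent case of \<open>C\<close> is harmless because
  \<open>|V(\<G>\<^sub>m) - {m'}| = \<sigma> \<ge> q + 1\<close>.\<close>

lemma reach_refl: "s \<in> W \<Longrightarrow> reach E W s s"
  unfolding reach_def by simp

lemma reach_target_in: "reach E W s t \<Longrightarrow> t \<in> W"
  unfolding reach_def by (auto elim: rtranclp.cases)

lemma reach_trans: "reach E W s t \<Longrightarrow> reach E W t u \<Longrightarrow> reach E W s u"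
  unfolding reach_def by auto

lemma reach_edge: "x \<in> W \<Longrightarrow> y \<in> W \<Longrightarrow> E x y \<Longrightarrow> reach E W x y"
  unfolding reach_def by (simp add: r_into_rtranclp)

lemma reach_edge_cons: "x \<in> W \<Longrightarrow> E x y \<Longrightarrow> reach E W y z \<Longrightarrow> reach E W x z"
  unfolding reach_def by (auto intro: converse_rtranclp_into_rtranclp)

lemma reach_pair_imp_edge:
  assumes "reach E {s, t} s t" and "s \<noteq> t"
  shows "E s t"
proof -
  have "(\<lambda>x y. E x y \<and> x \<in> {s, t} \<and> y \<in> {s, t})\<^sup>*\<^sup>* s z \<Longrightarrow> z = s \<or> E s t" for z
    by (induction rule: rtranclp_induct) auto
  then show ?thesis
    using assms unfolding reach_def by blast
qed

lemma components_meet_iff_reach: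
  "(\<forall>C \<in> components E W. C \<inter> S \<noteq> {} \<longrightarrow> C \<inter> M \<noteq> {})
     \<longleftrightarrow> (\<forall>w \<in> S \<inter> W. \<exists>u \<in> M. reach E W w u)"
proof
  assume meet: "\<forall>C \<in> components E W. C \<inter> S \<noteq> {} \<longrightarrow> C \<inter> M \<noteq> {}"
  show "\<forall>w \<in> S \<inter> W. \<exists>u \<in> M. reach E W w u"
  proof
    fix w assume w: "w \<in> S \<inter> W"
    have "{t. reach E W w t} \<in> components E W"
      using w unfolding components_def by auto
    moreover have "w \<in> {t. reach E W w t} \<inter> S"
      using w by (simp add: reach_refl)
    ultimately have "{t. reach E W w t} \<inter> M \<noteq> {}"
      using meet by (metis empty_iff)
    then show "\<exists>u \<in> M. reach E W w u"
      by auto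
  qed
next
  assume reach_mon: "\<forall>w \<in> S \<inter> W. \<exists>u \<in> M. reach E W w u"
  show "\<forall>C \<in> components E W. C \<inter> S \<noteq> {} \<longrightarrow> C \<inter> M \<noteq> {}"
  proof (intro ballI impI)
    fix C assume "C \<in> components E W" and "C \<inter> S \<noteq> {}"
    then obtain s w where C: "C = {t. reach E W s t}" and w: "w \<in> S" "reach E W s w"
      unfolding components_def by auto
    have "w \<in> W"
      using w(2) by (rule reach_target_in)
    with reach_mon w(1) obtain u where "u \<in> M" "reach E W w u"
      by blast
    with C w(2) have "u \<in> C \<inter> M"
      using reach_trans by simp
    then show "C \<inter> M \<noteq> {}"
      by blast
  qed
qed

lemma min_cut_card_ge_iff:
  assumes "s \<in> VH" "t \<in> VH" "s \<noteq> t" "k \<le> card (VH - {t})"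
  shows "k \<le> min_cut_card VH EH s t \<longleftrightarrow>
    (\<forall>C. C \<subseteq> VH - {s, t} \<and> card C < k \<longrightarrow> reach EH (VH - C) s t)"
proof (cases "EH s t")
  case True
  then show ?thesis
    using assms by (auto simp: min_cut_card_def intro: reach_edge)
next
  case False
  define P where "P k \<longleftrightarrow> (\<exists>C. C \<subseteq> VH - {s, t} \<and> \<not> reach EH (VH - C) s t \<and> card C = k)" for k
  have "VH - (VH - {s, t}) = {s, t}"
    using assms by auto
  then have "\<not> reach EH (VH - (VH - {s, t})) s t"
    using False \<open>s \<noteq> t\<close> reach_pair_imp_edge by metis
  then have "P (card (VH - {s, t}))"
    unfolding P_def by blast
  then have "k \<le> Least P \<longleftrightarrow> (\<forall>j. P j \<longrightarrow> k \<le> j)"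
    by (meson LeastI Least_le order_trans)
  moreover have "min_cut_card VH EH s t = Least P"
    using False unfolding min_cut_card_def P_def by simp
  moreover have "(\<forall>j. P j \<longrightarrow> k \<le> j) \<longleftrightarrow>
      (\<forall>C. C \<subseteq> VH - {s, t} \<and> card C < k \<longrightarrow> reach EH (VH - C) s t)"
  proof
    assume "\<forall>j. P j \<longrightarrow> k \<le> j"
    then show "\<forall>C. C \<subseteq> VH - {s, t} \<and> card C < k \<longrightarrow> reach EH (VH - C) s t"
      unfolding P_def using leD by blast
  next
    assume "\<forall>C. C \<subseteq> VH - {s, t} \<and> card C < k \<longrightarrow> reach EH (VH - C) s t"
    then show "\<forall>j. P j \<longrightarrow> k \<le> j"
      unfolding P_def using not_le by blast
  qed
  ultimately show ?thesis
    by simp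
qed

lemma Gamma_ge_iff:
  assumes "finite S" "S \<noteq> {}"
  shows "k \<le> Gamma VH EH S t \<longleftrightarrow> (\<forall>w \<in> S. k \<le> min_cut_card VH EH w t)"
  unfolding Gamma_def using assms by (simp add: Min_ge_iff)

lemma reach_monitor_imp_reach_virtual:
  assumes ug: "ugraph V E" and "reach E (V - insert m X) a u" "u \<in> M" "a \<notin> M"
  shows "reach (Gm_E V E M m) (Gm_V V M - Some ` X) (Some a) None"
proof -
  have "(\<lambda>x y. E x y \<and> x \<in> V - insert m X \<and> y \<in> V - insert m X)\<^sup>*\<^sup>* a u"
    using assms(2) unfolding reach_def by blast
  then show ?thesis
    using \<open>a \<notin> M\<close>
  proof (induction rule: converse_rtranclp_induct)
    case base
    with \<open>u \<in> M\<close> show ?case by simp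
  next
    case (step a y)
    have "E y a"
      using step.hyps(1) ug unfolding ugraph_def by blast
    have a: "Some a \<in> Gm_V V M - Some ` X"
      using step.hyps(1) step.prems unfolding Gm_V_def by auto
    show ?case
    proof (cases "y \<in> M")
      case True
      with step \<open>E y a\<close> have "Gm_E V E M m (Some a) None"
        unfolding Gm_E_def nbr_nonmon_def by auto
      then show ?thesis
        using a by (intro reach_edge) (auto simp: Gm_V_def)
    next
      case False
      with step have "Gm_E V E M m (Some a) (Some y)"
        unfolding Gm_E_def by simp
      with a show ?thesis
        using step.IH[OF False] by (rule reach_edge_cons)
    qed
  qed
qed

lemma reach_virtual_imp_reach_monitor:
  assumes ug: "ugraph V E" and "m \<in> M" "M \<subseteq> V" "X \<subseteq> V - M"
    and "reach (Gm_E V E M m) (Gm_V V M - Some ` X) (Some a) None"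
  shows "\<exists>u \<in> M. reach E (V - insert m X) a u"
proof -
  have "\<exists>u \<in> M. reach E (V - insert m X) a u"
    if "(\<lambda>x y. Gm_E V E M m x y \<and> x \<in> Gm_V V M - Some ` X \<and> y \<in> Gm_V V M - Some ` X)\<^sup>*\<^sup>* x None"
      and "x = Some a" for x a
    using that
  proof (induction arbitrary: a rule: converse_rtranclp_induct)
    case base
    then show ?case by simp
  next
    case (step x y)
    have a: "a \<in> V - insert m X"
      using step.hyps(1) step.prems \<open>m \<in> M\<close> by (auto simp: Gm_V_def)
    show ?case
    proof (cases y)
      case None
      with step obtain u where u: "u \<in> M - {m}" "E u a"
        by (auto simp: Gm_E_def nbr_nonmon_def)
      then have "E a u"
        using ug unfolding ugraph_def by blast
      with a u show ?thesis
        using assms(3,4) by (intro bexI[of _ u] reach_edge) auto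
    next
      case (Some b)
      with step have "E a b"
        by (simp add: Gm_E_def)
      obtain u where "u \<in> M" "reach E (V - insert m X) b u"
        using step.IH[OF Some] by blast
      with a \<open>E a b\<close> show ?thesis
        by (meson reach_edge_cons)
    qed
  qed
  with assms(5) show ?thesis
    unfolding reach_def by blast
qed

lemma reach_monitor_iff_reach_virtual:
  assumes "ugraph V E" "m \<in> M" "M \<subseteq> V" "X \<subseteq> V - M" "a \<notin> M"
  shows "(\<exists>u \<in> M. reach E (V - insert m X) a u)
    \<longleftrightarrow> reach (Gm_E V E M m) (Gm_V V M - Some ` X) (Some a) None"
proof
  assume "\<exists>u \<in> M. reach E (V - insert m X) a u"
  then obtain u where "reach E (V - insert m X) a u" "u \<in> M" ..
  then show "reach (Gm_E V E M m) (Gm_V V M - Some ` X) (Some a) None"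
    using reach_monitor_imp_reach_virtual[OF assms(1) _ _ assms(5)] by blast
qed (rule reach_virtual_imp_reach_monitor[OF assms(1-4)])

lemma components_meet_monitor_iff_reach_virtual:
  assumes ug: "ugraph V E" and "m \<in> M" "M \<subseteq> V" "S \<subseteq> V - M" and X: "X \<subseteq> V - M"
  shows "(\<forall>C \<in> components E (V - insert m X). C \<inter> S \<noteq> {} \<longrightarrow> C \<inter> M \<noteq> {})
    \<longleftrightarrow> (\<forall>w \<in> S - X. reach (Gm_E V E M m) (Gm_V V M - Some ` X) (Some w) None)"
proof -
  have "S \<inter> (V - insert m X) = S - X"
    using assms by blast
  then have "(\<forall>C \<in> components E (V - insert m X). C \<inter> S \<noteq> {} \<longrightarrow> C \<inter> M \<noteq> {})
      \<longleftrightarrow> (\<forall>w \<in> S - X. \<exists>u \<in> M. reach E (V - insert m X) w u)"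
    by (simp add: components_meet_iff_reach)
  also have "\<dots> \<longleftrightarrow> (\<forall>w \<in> S - X. reach (Gm_E V E M m) (Gm_V V M - Some ` X) (Some w) None)"
    using reach_monitor_iff_reach_virtual[OF ug \<open>m \<in> M\<close> \<open>M \<subseteq> V\<close> X] \<open>S \<subseteq> V - M\<close>
    by (intro ball_cong) auto
  finally show ?thesis .
qed

lemma Gm_cut_ge_iff:
  assumes "w \<in> V - M" "k \<le> card (V - M)"
  shows "k \<le> min_cut_card (Gm_V V M) (Gm_E V E M m) (Some w) None \<longleftrightarrow>
    (\<forall>X. X \<subseteq> V - M - {w} \<and> card X < k \<longrightarrow>
      reach (Gm_E V E M m) (Gm_V V M - Some ` X) (Some w) None)"
proof -
  have "Gm_V V M - {None} = Some ` (V - M)"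
    "Gm_V V M - {Some w, None} = Some ` (V - M - {w})"
    unfolding Gm_V_def by auto
  then have "k \<le> min_cut_card (Gm_V V M) (Gm_E V E M m) (Some w) None \<longleftrightarrow>
    (\<forall>C. C \<subseteq> Some ` (V - M - {w}) \<and> card C < k \<longrightarrow>
      reach (Gm_E V E M m) (Gm_V V M - C) (Some w) None)"
    using assms by (subst min_cut_card_ge_iff) (auto simp: Gm_V_def card_image)
  also have "\<dots> \<longleftrightarrow> (\<forall>X. X \<subseteq> V - M - {w} \<and> card X < k \<longrightarrow>
      reach (Gm_E V E M m) (Gm_V V M - Some ` X) (Some w) None)"
  proof (intro iffI allI impI)
    fix X
    assume "\<forall>C. C \<subseteq> Some ` (V - M - {w}) \<and> card C < k \<longrightarrow>
      reach (Gm_E V E M m) (Gm_V V M - C) (Some w) None"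
      and "X \<subseteq> V - M - {w} \<and> card X < k"
    then show "reach (Gm_E V E M m) (Gm_V V M - Some ` X) (Some w) None"
      by (simp add: card_image image_mono)
  next
    fix C
    assume cuts: "\<forall>X. X \<subseteq> V - M - {w} \<and> card X < k \<longrightarrow>
      reach (Gm_E V E M m) (Gm_V V M - Some ` X) (Some w) None"
      and C: "C \<subseteq> Some ` (V - M - {w}) \<and> card C < k"
    then obtain X where "X \<subseteq> V - M - {w}" "C = Some ` X"
      by (auto simp: subset_image_iff)
    with cuts C show "reach (Gm_E V E M m) (Gm_V V M - C) (Some w) None"
      by (simp add: card_image)
  qed
  finally show ?thesis .
qed

theorem lemma6:
  fixes V :: "'a set" and E :: "'a \<Rightarrow> 'a \<Rightarrow> bool" and M S :: "'a set" and m :: 'a and q :: nat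
  assumes "connected_graph V E"
    and "M \<subseteq> V"
    and "S \<subseteq> V - M" and "S \<noteq> {}"
    and "m \<in> M"
    and "q \<le> card (V - M) - 1"
  shows "(\<forall>X. X \<subseteq> V - M \<and> card X \<le> q \<longrightarrow>
            (\<forall>C \<in> components E (V - insert m X). C \<inter> S \<noteq> {} \<longrightarrow> C \<inter> M \<noteq> {}))
         \<longleftrightarrow> Gamma (Gm_V V M) (Gm_E V E M m) (Some ` S) None \<ge> q + 1"
proof -
  let ?R = "\<lambda>X w. reach (Gm_E V E M m) (Gm_V V M - Some ` X) (Some w) None"
  have ug: "ugraph V E"
    using assms(1) unfolding connected_graph_def by blast
  then have "finite S"
    using assms(3) unfolding ugraph_def by (meson finite_Diff finite_subset)
  have "V - M \<noteq> {}" "finite (V - M)"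
    using assms(3,4) ug unfolding ugraph_def by auto
  then have "0 < card (V - M)"
    by (simp add: card_gt_0_iff)
  then have q: "q + 1 \<le> card (V - M)"
    using assms(6) by linarith
  have "(\<forall>X. X \<subseteq> V - M \<and> card X \<le> q \<longrightarrow>
            (\<forall>C \<in> components E (V - insert m X). C \<inter> S \<noteq> {} \<longrightarrow> C \<inter> M \<noteq> {}))
      \<longleftrightarrow> (\<forall>X. X \<subseteq> V - M \<and> card X \<le> q \<longrightarrow> (\<forall>w \<in> S - X. ?R X w))"
    using components_meet_monitor_iff_reach_virtual[OF ug assms(5,2,3)] by simp
  also have "\<dots> \<longleftrightarrow> (\<forall>w \<in> S. \<forall>X. X \<subseteq> V - M - {w} \<and> card X < q + 1 \<longrightarrow> ?R X w)"
    unfolding less_Suc_eq_le Suc_eq_plus1[symmetric] by blast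
  also have "\<dots> \<longleftrightarrow> (\<forall>w \<in> S. q + 1 \<le> min_cut_card (Gm_V V M) (Gm_E V E M m) (Some w) None)"
    using Gm_cut_ge_iff[OF _ q] assms(3) by (intro ball_cong) auto
  also have "\<dots> \<longleftrightarrow> Gamma (Gm_V V M) (Gm_E V E M m) (Some ` S) None \<ge> q + 1"
    using \<open>finite S\<close> assms(4) by (simp add: Gamma_ge_iff)
  finally show ?thesis .
qed

end
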